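(* Let $r,m,s$ be positive integers with $\gcd(r,2^{3m}-1)=1$, and let $a,b\in\mathbb{F}_{2^{3m}}^*$. Put $A=a^{2^{2m}+2^m+1}+1$ and $B=a^{2^{2m}}b^{2^m}+a^{2^{2m}+2^m}b+b^{2^{2m}}$. Then the polynomial \[ f(x)=x^r\left(x^{2^m(2^m-1)}+ax^{2^m-1}+b\right)^{s(2^{2m}+2^m+1)} \] is a permutation polynomial of $\mathbb{F}_{2^{3m}}$ in each of the following two cases: (i) $A\neq 0$ and $(B/A)^{2^{2m}+2^m+1}\neq 1$; (ii) $A=0$ and $B\neq 0$.
   Context: A polynomial is a permutation polynomial of a finite field if it induces a bijection of that field. *)

theory Defs
  imports "HOL-Computational_Algebra.Polynomial"
begin

definition permutation_poly :: "'a::{field,finite} poly \<Rightarrow> bool" where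
  "permutation_poly p \<longleftrightarrow> bij (poly p)"

end

theory Submission
  imports Defs "HOL-Computational_Algebra.Primes"
begin

text \<open>Write \<open>Q = 2^m\<close> and \<open>N = Q\<^sup>2 + Q + 1\<close>, so that \<open>2^(3m) - 1 = (Q - 1) N\<close>.
  The polynomial has the shape \<open>x^r h(x^(Q-1))^(sN)\<close> with \<open>h y = y^Q + a y + b\<close>, and
  \<open>x^(Q-1)\<close> ranges over the subgroup \<open>\<mu>\<^sub>N\<close> of \<open>N\<close>-th roots of unity. If \<open>h\<close> has no zero
  on \<open>\<mu>\<^sub>N\<close>, then \<open>f(x)^(Q-1) = (x^(Q-1))^r\<close> for \<open>x \<noteq> 0\<close>; since \<open>x \<mapsto> x^r\<close> is a bijection,
  \<open>f(x)\<close> determines first \<open>x^(Q-1)\<close>, then the factor \<open>h(x^(Q-1))^(sN)\<close>, then \<open>x^r\<close> and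
  finally \<open>x\<close>. A zero \<open>y\<close> of \<open>h\<close> satisfies the \<open>\<bbbF>\<^sub>2\<close>-affine relation \<open>y^Q = a y + b\<close>;
  applying the Frobenius \<open>z \<mapsto> z^Q\<close> twice and using \<open>y^(Q^3) = y\<close> gives \<open>A y = B\<close>,
  which is excluded on \<open>\<mu>\<^sub>N\<close> by either hypothesis.\<close>

lemma power_card_minus_one_eq_one:
  fixes x :: "'a::{field,finite}"
  assumes "x \<noteq> 0"
  shows "x ^ (card (UNIV :: 'a set) - 1) = 1"
proof -
  let ?U = "- {0} :: 'a set"
  have "(\<Prod>y\<in>?U. x * y) = \<Prod>?U"
    by (rule prod.reindex_bij_witness[of _ "\<lambda>y. y / x" "\<lambda>y. x * y"]) (use assms in auto)
  moreover have "(\<Prod>y\<in>?U. x * y) = x ^ card ?U * \<Prod>?U"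
    by (simp add: prod.distrib)
  moreover have "\<Prod>?U \<noteq> 0"
    by simp
  moreover have "card ?U = card (UNIV :: 'a set) - 1"
    by (simp add: Compl_eq_Diff_UNIV card_Diff_singleton)
  ultimately show ?thesis
    by simp
qed

lemma power_card_eq_self:
  fixes x :: "'a::{field,finite}"
  shows "x ^ card (UNIV :: 'a set) = x"
proof (cases "x = 0")
  case False
  have "card (UNIV :: 'a set) = Suc (card (UNIV :: 'a set) - 1)"
    using finite_UNIV_card_ge_0[where ?'a = 'a] by simp
  then show ?thesis
    by (metis False power_Suc power_card_minus_one_eq_one mult_1_right)
qed (simp add: finite_UNIV_card_ge_0)

lemma inj_power_coprime_card:
  assumes "0 < r" "coprime r (card (UNIV :: 'a::{field,finite} set) - 1)"
  shows "inj (\<lambda>x::'a. x ^ r)"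
proof -
  obtain u v where uv: "r * u = (card (UNIV :: 'a set) - 1) * v + 1"
    using bezout_nat[of r "card (UNIV :: 'a set) - 1"] assms by (auto simp: coprime_iff_gcd_eq_1)
  have "(x ^ r) ^ u = x" for x :: 'a
  proof (cases "x = 0")
    case False
    have "(x ^ r) ^ u = (x ^ (card (UNIV :: 'a set) - 1)) ^ v * x"
      by (simp add: uv power_add flip: power_mult)
    then show ?thesis
      using power_card_minus_one_eq_one[OF False] by simp
  qed (use uv in \<open>simp flip: power_mult\<close>)
  then show ?thesis
    by (metis injI)
qed

lemma inj_power_mult_power_comp:
  fixes h :: "'a::{field,finite} \<Rightarrow> 'a"
  assumes card: "card (UNIV :: 'a set) - 1 = d * N"
    and r: "0 < r" "coprime r (card (UNIV :: 'a set) - 1)"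
    and h: "\<And>y. y ^ N = 1 \<Longrightarrow> h y \<noteq> 0"
  shows "inj (\<lambda>x. x ^ r * h (x ^ d) ^ (s * N))"
proof (rule injI)
  define f where "f x = x ^ r * h (x ^ d) ^ (s * N)" for x
  have h_nonzero: "h (x ^ d) \<noteq> 0" if "x \<noteq> 0" for x
  proof -
    have "(x ^ d) ^ N = x ^ (card (UNIV :: 'a set) - 1)"
      by (simp only: card power_mult)
    then show ?thesis
      using h power_card_minus_one_eq_one[OF that] by simp
  qed
  have f_nonzero: "f x \<noteq> 0" if "x \<noteq> 0" for x
    using h_nonzero[OF that] that by (simp add: f_def)
  have f_power: "f x ^ d = (x ^ d) ^ r" if "x \<noteq> 0" for x
  proof -
    have "s * N * d = (card (UNIV :: 'a set) - 1) * s"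
      by (simp only: card ac_simps)
    then have "(h (x ^ d) ^ (s * N)) ^ d = (h (x ^ d) ^ (card (UNIV :: 'a set) - 1)) ^ s"
      by (simp only: power_mult [symmetric])
    then have factor: "(h (x ^ d) ^ (s * N)) ^ d = 1"
      by (simp only: power_card_minus_one_eq_one[OF h_nonzero[OF that]] power_one)
    have "f x ^ d = (x ^ r) ^ d * (h (x ^ d) ^ (s * N)) ^ d"
      by (simp add: f_def power_mult_distrib)
    also have "\<dots> = (x ^ d) ^ r"
      unfolding factor by (simp add: mult.commute flip: power_mult)
    finally show ?thesis .
  qed
  have "f 0 = 0"
    using r(1) by (simp add: f_def)
  have inj_r: "inj (\<lambda>x::'a. x ^ r)"
    using inj_power_coprime_card[OF r] .
  fix x y assume eq: "f x = f y"
  show "x = y"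
  proof (cases "x = 0 \<or> y = 0")
    case True
    then show ?thesis
      using eq f_nonzero \<open>f 0 = 0\<close> by metis
  next
    case False
    then have "(x ^ d) ^ r = (y ^ d) ^ r"
      using eq f_power by metis
    then have "x ^ d = y ^ d"
      using inj_r by (metis injD)
    then have "x ^ r = y ^ r"
      using eq h_nonzero False by (simp add: f_def)
    then show ?thesis
      using inj_r by (metis injD)
  qed
qed

lemma CHAR_eq_2_if_even_card:
  assumes "even (card (UNIV :: 'a::{field,finite} set))"
  shows "CHAR('a) = 2"
proof (rule CHAR_eq_posI)
  have "odd (card (UNIV :: 'a set) - 1)"
    using assms finite_UNIV_card_ge_0[where ?'a = 'a] by simp
  then have "- 1 = (1::'a)"
    using power_card_minus_one_eq_one[of "- 1 :: 'a"] by simp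
  then show "of_nat 2 = (0::'a)"
    by (metis add_eq_0_iff one_add_one of_nat_numeral)
qed (auto simp: less_2_cases_iff)

lemma frobenius_affine_root_linear:
  fixes a b y :: "'a::comm_ring_1"
  assumes char: "CHAR('a) = 2" and Q: "Q = 2 ^ k"
    and periodic: "y ^ (Q * Q * Q) = y"
    and root: "y ^ Q + a * y + b = 0"
  shows "(a ^ (Q * Q + Q + 1) + 1) * y
           = a ^ (Q * Q) * b ^ Q + a ^ (Q * Q + Q) * b + b ^ (Q * Q)"
proof -
  have double: "u + u = 0" for u :: 'a
    using uminus_CHAR_2[OF char, of u] by (metis add.right_inverse)
  have frob: "(u + v) ^ Q = u ^ Q + v ^ Q" for u v :: 'a
    using freshmans_dream'[of Q k u v] char Q by simp
  have y1: "y ^ Q = a * y + b"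
    using root uminus_CHAR_2[OF char] by (simp add: add.assoc add_eq_0_iff)
  have y2: "y ^ (Q * Q) = a ^ Q * (a * y + b) + b ^ Q"
    by (simp add: power_mult y1 frob power_mult_distrib)
  have "y = (y ^ (Q * Q)) ^ Q"
    using periodic by (simp add: power_mult)
  also have "\<dots> = a ^ (Q * Q) * (a ^ Q * (a * y + b) + b ^ Q) + b ^ (Q * Q)"
    by (simp add: y2 frob power_mult_distrib y1 flip: power_mult)
  also have "\<dots> = a ^ (Q * Q + Q + 1) * y + (a ^ (Q * Q) * b ^ Q + a ^ (Q * Q + Q) * b + b ^ (Q * Q))"
    by (simp add: algebra_simps power_add)
  finally have "a ^ (Q * Q + Q + 1) * y + y = a ^ (Q * Q) * b ^ Q + a ^ (Q * Q + Q) * b + b ^ (Q * Q)"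
    using double by (metis add.assoc add.commute add_0)
  then show ?thesis
    by (simp add: distrib_right)
qed

theorem proposition9:
  fixes r m s :: nat and a b :: "'a::{field,finite}"
  assumes card: "card (UNIV :: 'a set) = 2 ^ (3 * m)"
    and pos: "r > 0" "m > 0" "s > 0"
    and cop: "gcd r (2 ^ (3 * m) - 1) = 1"
    and ab: "a \<noteq> 0" "b \<noteq> 0"
  defines "A \<equiv> a ^ (2 ^ (2 * m) + 2 ^ m + 1) + 1"
    and "B \<equiv> a ^ (2 ^ (2 * m)) * b ^ (2 ^ m) + a ^ (2 ^ (2 * m) + 2 ^ m) * b + b ^ (2 ^ (2 * m))"
    and "f \<equiv> monom 1 r *
              (monom 1 (2 ^ m * (2 ^ m - 1)) + monom a (2 ^ m - 1) + [:b:])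
                ^ (s * (2 ^ (2 * m) + 2 ^ m + 1))"
  assumes cases: "(A \<noteq> 0 \<and> (B / A) ^ (2 ^ (2 * m) + 2 ^ m + 1) \<noteq> 1) \<or> (A = 0 \<and> B \<noteq> 0)"
  shows "permutation_poly f"
proof -
  define Q :: nat where "Q = 2 ^ m"
  define N where "N = Q * Q + Q + 1"
  have Q_sq: "(2::nat) ^ (2 * m) = Q * Q"
    by (simp add: Q_def mult_2 power_add)
  have "3 * m = m + m + m"
    by simp
  then have Q_cube: "card (UNIV :: 'a set) = Q * Q * Q"
    by (simp only: card Q_def power_add)
  have "Q > 0"
    by (simp add: Q_def)
  then have card_N: "card (UNIV :: 'a set) - 1 = (Q - 1) * N"
    by (cases Q) (simp_all add: Q_cube N_def algebra_simps)
  have "even (card (UNIV :: 'a set))"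
    using pos(2) by (simp add: card)
  then have char: "CHAR('a) = 2"
    by (rule CHAR_eq_2_if_even_card)
  have A: "A = a ^ (Q * Q + Q + 1) + 1"
    and B: "B = a ^ (Q * Q) * b ^ Q + a ^ (Q * Q + Q) * b + b ^ (Q * Q)"
    unfolding A_def B_def Q_sq Q_def[symmetric] by (rule refl)+
  define h where "h y = y ^ Q + a * y + b" for y
  have "h y \<noteq> 0" if "y ^ N = 1" for y
  proof
    assume "h y = 0"
    moreover have "y ^ (Q * Q * Q) = y"
      using power_card_eq_self[of y] by (simp only: Q_cube)
    ultimately have "A * y = B"
      unfolding A B h_def using frobenius_affine_root_linear[OF char Q_def] by blast
    moreover have "(A \<noteq> 0 \<and> (B / A) ^ N \<noteq> 1) \<or> (A = 0 \<and> B \<noteq> 0)"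
      using cases unfolding N_def Q_sq Q_def[symmetric] .
    ultimately show False
      using that by (auto simp: field_simps)
  qed
  then have "inj (\<lambda>x. x ^ r * h (x ^ (Q - 1)) ^ (s * N))"
    using inj_power_mult_power_comp[OF card_N pos(1)] cop by (simp add: card coprime_iff_gcd_eq_1)
  moreover have "poly f = (\<lambda>x. x ^ r * h (x ^ (Q - 1)) ^ (s * N))"
    unfolding f_def h_def N_def Q_sq Q_def[symmetric]
    by (simp add: fun_eq_iff poly_monom mult.commute flip: power_mult)
  ultimately show ?thesis
    by (simp add: permutation_poly_def bij_def finite_UNIV_inj_surj)
qed

end
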